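(* Let $\Omega=\{1,\dots,m\}^{\mathbb{N}}$, let $\mathcal{M}$ be the set of Borel probabilities on $\Omega$ with the Monge–Kantorovich metric $d_{MK}$, let $(\eta_j)_{j\in\mathbb{N}}$ be a sequence in $\mathcal{M}$, and let $R:\Omega\times\Omega\to\Omega$ be a continuous convolution kernel which is $s$-Lipschitz contractive in the second variable ($0\le s<1$ and $d_\Omega(R(x,y),R(x,y'))\le s\,d_\Omega(y,y')$ for all $x,y,y'$). Define $\phi_j:\mathcal{M}\to\mathcal{M}$ by $\phi_j(\mu)=\eta_j*\mu$, where $*$ is the convolution associated to $R$. Then the countable iterated function system $(\mathcal{M},\phi_j)_{j\in\mathbb{N}}$ is uniformly contractive with Lipschitz constant $s$, i.e. $d_{MK}(\phi_j(\mu),\phi_j(\mu'))\le s\,d_{MK}(\mu,\mu')$ for all $j$ and all $\mu,\mu'\in\mathcal{M}$.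
   Context: $d_\Omega(\alpha,\beta)=2^{-k}$ with $k=\min\{i:\alpha_i\neq\beta_i\}$ (and $0$ if $\alpha=\beta$); $d_{MK}(\mu,\nu)=\sup\{\int f\,d\mu-\int f\,d\nu : f \text{ 1-Lipschitz}\}$. The convolution associated to $R$ is $\int_\Omega f\,d(\nu*\mu)=\int\int f(R(x,y))\,d\nu(x)\,d\mu(y)$ for all continuous $f$. *)

theory Defs
  imports "HOL-Probability.Probability"
begin

text \<open>The symbol space Omega = {1,...,m}^N. Sequences are represented as functions
  nat => nat; position i of the function is the (i+1)-th symbol alpha_(i+1) of the paper.\<close>
definition OmegaSet :: "nat \<Rightarrow> (nat \<Rightarrow> nat) set" where
  "OmegaSet m = {\<alpha>. \<forall>i. \<alpha> i \<in> {1..m}}"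

text \<open>d_Omega(alpha,beta) = 2^(-k), k the (1-based) first index where they differ; 0 if equal.\<close>
definition dOmega :: "(nat \<Rightarrow> nat) \<Rightarrow> (nat \<Rightarrow> nat) \<Rightarrow> real" where
  "dOmega \<alpha> \<beta> = (if \<alpha> = \<beta> then 0 else (1/2) ^ (Suc (LEAST k. \<alpha> k \<noteq> \<beta> k)))"

definition Omega_open :: "nat \<Rightarrow> (nat \<Rightarrow> nat) set \<Rightarrow> bool" where
  "Omega_open m U \<longleftrightarrow> U \<subseteq> OmegaSet m \<and>
     (\<forall>x\<in>U. \<exists>e>0. \<forall>y\<in>OmegaSet m. dOmega x y < e \<longrightarrow> y \<in> U)"

definition OmegaBorel :: "nat \<Rightarrow> (nat \<Rightarrow> nat) measure" where
  "OmegaBorel m = sigma (OmegaSet m) {U. Omega_open m U}"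

definition ProbMeas :: "nat \<Rightarrow> (nat \<Rightarrow> nat) measure set" where
  "ProbMeas m = {\<mu>. sets \<mu> = sets (OmegaBorel m) \<and> prob_space \<mu>}"

definition Lip1 :: "nat \<Rightarrow> ((nat \<Rightarrow> nat) \<Rightarrow> real) \<Rightarrow> bool" where
  "Lip1 m f \<longleftrightarrow> (\<forall>x\<in>OmegaSet m. \<forall>y\<in>OmegaSet m. \<bar>f x - f y\<bar> \<le> dOmega x y)"

definition dMK :: "nat \<Rightarrow> (nat \<Rightarrow> nat) measure \<Rightarrow> (nat \<Rightarrow> nat) measure \<Rightarrow> real" where
  "dMK m \<mu> \<nu> = (SUP f\<in>{f. Lip1 m f}. (\<integral>x. f x \<partial>\<mu>) - (\<integral>x. f x \<partial>\<nu>))"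

definition kernel_continuous :: "nat \<Rightarrow> ((nat \<Rightarrow> nat) \<Rightarrow> (nat \<Rightarrow> nat) \<Rightarrow> (nat \<Rightarrow> nat)) \<Rightarrow> bool" where
  "kernel_continuous m R \<longleftrightarrow>
     (\<forall>x\<in>OmegaSet m. \<forall>y\<in>OmegaSet m. R x y \<in> OmegaSet m) \<and>
     (\<forall>x\<in>OmegaSet m. \<forall>y\<in>OmegaSet m. \<forall>e>0. \<exists>\<delta>>0. \<forall>x'\<in>OmegaSet m. \<forall>y'\<in>OmegaSet m.
        dOmega x x' < \<delta> \<and> dOmega y y' < \<delta> \<longrightarrow> dOmega (R x y) (R x' y') < e)"

definition conv :: "nat \<Rightarrow> ((nat \<Rightarrow> nat) \<Rightarrow> (nat \<Rightarrow> nat) \<Rightarrow> (nat \<Rightarrow> nat))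
     \<Rightarrow> (nat \<Rightarrow> nat) measure \<Rightarrow> (nat \<Rightarrow> nat) measure \<Rightarrow> (nat \<Rightarrow> nat) measure" where
  "conv m R \<nu> \<mu> = distr (\<nu> \<Otimes>\<^sub>M \<mu>) (OmegaBorel m) (\<lambda>(x, y). R x y)"

end

theory Submission
  imports Defs
begin

text \<open>If f is 1-Lipschitz, then for fixed x the map y \<mapsto> f (R x y) is s-Lipschitz,
  so its integrals against \<mu> and \<mu>' differ by at most s \<cdot> dMK \<mu> \<mu>'. By Fubini,
  the integral of f against \<eta> * \<mu> is the \<eta>-integral of these inner integrals, and
  integrating the pointwise estimate over x gives the contraction. The measure theory
  needed is that R is measurable for the product \<sigma>-algebra: by continuity, the
  preimage of an open set is a union of products of cylinders, of which there are
  only countably many.\<close>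

lemma dOmega_le_if_agree:
  assumes "\<forall>i<n. x i = y i"
  shows "dOmega x y \<le> (1/2) ^ Suc n"
proof (cases "x = y")
  case False
  then obtain k where "x k \<noteq> y k" by auto
  define l where "l = (LEAST k. x k \<noteq> y k)"
  have "x l \<noteq> y l" unfolding l_def using \<open>x k \<noteq> y k\<close> by (rule LeastI)
  then have "n \<le> l" using assms by (meson not_le)
  then have "(1/2::real) ^ Suc l \<le> (1/2) ^ Suc n" by (intro power_decreasing) auto
  then show ?thesis using False by (simp add: dOmega_def l_def)
qed (simp add: dOmega_def)

lemma agree_if_dOmega_less:
  assumes "dOmega x y < (1/2) ^ n" and "i < n"
  shows "x i = y i"
proof (rule ccontr)
  assume ne: "x i \<noteq> y i"
  define l where "l = (LEAST k. x k \<noteq> y k)"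
  have "l \<le> i" unfolding l_def using ne by (rule Least_le)
  then have "(1/2::real) ^ n \<le> (1/2) ^ Suc l" using assms(2) by (intro power_decreasing) auto
  then show False using assms(1) ne by (auto simp: dOmega_def l_def split: if_splits)
qed

lemma dOmega_nonneg: "0 \<le> dOmega x y"
  by (simp add: dOmega_def)

lemma dOmega_le_one: "dOmega x y \<le> 1"
proof -
  have "(1/2::real) ^ n \<le> 1" for n by (rule power_le_one) auto
  from this[of "Suc (LEAST k. x k \<noteq> y k)"] show ?thesis
    unfolding dOmega_def by (cases "x = y") auto
qed

lemma space_OmegaBorel: "space (OmegaBorel m) = OmegaSet m"
  unfolding OmegaBorel_def by (rule space_measure_of) (auto simp: Omega_open_def)

lemma Omega_open_in_sets: "Omega_open m U \<Longrightarrow> U \<in> sets (OmegaBorel m)"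
  unfolding OmegaBorel_def by (subst sets_measure_of) (auto simp: Omega_open_def)

definition cylinder :: "nat \<Rightarrow> nat list \<Rightarrow> (nat \<Rightarrow> nat) set" where
  "cylinder m xs = {\<alpha>\<in>OmegaSet m. \<forall>i<length xs. \<alpha> i = xs ! i}"

lemma Omega_open_cylinder: "Omega_open m (cylinder m xs)"
  unfolding Omega_open_def
proof (intro conjI ballI)
  fix x assume x: "x \<in> cylinder m xs"
  show "\<exists>e>0. \<forall>y\<in>OmegaSet m. dOmega x y < e \<longrightarrow> y \<in> cylinder m xs"
    using x agree_if_dOmega_less[of x _ "length xs"]
    by (intro exI[of _ "(1/2) ^ length xs"]) (auto simp: cylinder_def)
qed (auto simp: cylinder_def)

lemma mem_cylinder_prefix: "x \<in> OmegaSet m \<Longrightarrow> x \<in> cylinder m (map x [0..<n])"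
  by (auto simp: cylinder_def)

lemma dOmega_less_if_mem_cylinder_prefix:
  assumes "x' \<in> cylinder m (map x [0..<n])"
  shows "dOmega x x' < (1/2) ^ n"
proof -
  have "dOmega x x' \<le> (1/2) ^ Suc n"
    using assms by (intro dOmega_le_if_agree) (auto simp: cylinder_def)
  also have "\<dots> < (1/2) ^ n" by simp
  finally show ?thesis .
qed

lemma in_pair_sets_if_cylinder_nbhds:
  assumes "\<And>z. z \<in> V \<Longrightarrow> \<exists>p q. z \<in> cylinder m p \<times> cylinder m q \<and> cylinder m p \<times> cylinder m q \<subseteq> V"
  shows "V \<in> sets (OmegaBorel m \<Otimes>\<^sub>M OmegaBorel m)"
proof -
  define I where "I = {(p, q). cylinder m p \<times> cylinder m q \<subseteq> V}"
  have "V = (\<Union>(p, q)\<in>I. cylinder m p \<times> cylinder m q)"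
    using assms unfolding I_def by fast
  also have "\<dots> \<in> sets (OmegaBorel m \<Otimes>\<^sub>M OmegaBorel m)"
    using Omega_open_in_sets[OF Omega_open_cylinder]
    by (intro sets.countable_UN') (auto intro: countable_subset[of _ UNIV])
  finally show ?thesis .
qed

lemma Lip1_borel_measurable:
  assumes "Lip1 m f"
  shows "f \<in> borel_measurable (OmegaBorel m)"
proof (rule borel_measurableI)
  fix S :: "real set" assume S: "open S"
  have "Omega_open m (f -` S \<inter> OmegaSet m)"
    unfolding Omega_open_def
  proof (intro conjI ballI)
    fix x assume x: "x \<in> f -` S \<inter> OmegaSet m"
    then obtain e where e: "e > 0" "\<forall>y. dist y (f x) < e \<longrightarrow> y \<in> S"
      using S open_dist by blast
    have "dist (f y) (f x) \<le> dOmega x y" if "y \<in> OmegaSet m" for y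
      using assms x that by (auto simp: Lip1_def dist_real_def abs_minus_commute)
    then show "\<exists>e>0. \<forall>y\<in>OmegaSet m. dOmega x y < e \<longrightarrow> y \<in> f -` S \<inter> OmegaSet m"
      using e by (intro exI[of _ e]) force
  qed auto
  then show "f -` S \<inter> space (OmegaBorel m) \<in> sets (OmegaBorel m)"
    by (simp add: space_OmegaBorel Omega_open_in_sets)
qed

lemma kernel_continuous_cylinder_nbhd:
  assumes kc: "kernel_continuous m R" and U: "Omega_open m U"
    and x: "x \<in> OmegaSet m" and y: "y \<in> OmegaSet m" and RU: "R x y \<in> U"
  shows "\<exists>n. \<forall>x'\<in>cylinder m (map x [0..<n]). \<forall>y'\<in>cylinder m (map y [0..<n]). R x' y' \<in> U"
proof -
  obtain e where e: "e > 0" "\<forall>w\<in>OmegaSet m. dOmega (R x y) w < e \<longrightarrow> w \<in> U"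
    using U RU unfolding Omega_open_def by blast
  obtain d where d: "d > 0" "\<forall>x'\<in>OmegaSet m. \<forall>y'\<in>OmegaSet m.
      dOmega x x' < d \<and> dOmega y y' < d \<longrightarrow> dOmega (R x y) (R x' y') < e"
    using kc x y e(1) unfolding kernel_continuous_def by blast
  obtain n where n: "(1/2::real) ^ n < d"
    using real_arch_pow_inv[OF d(1), of "1/2"] by auto
  have "R x' y' \<in> U" if "x' \<in> cylinder m (map x [0..<n])" "y' \<in> cylinder m (map y [0..<n])" for x' y'
  proof -
    have "x' \<in> OmegaSet m" "y' \<in> OmegaSet m" using that by (auto simp: cylinder_def)
    moreover have "dOmega x x' < d" "dOmega y y' < d"
      using dOmega_less_if_mem_cylinder_prefix[OF that(1)]
        dOmega_less_if_mem_cylinder_prefix[OF that(2)] n by linarith+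
    ultimately show ?thesis using d(2) e(2) kc by (auto simp: kernel_continuous_def)
  qed
  then show ?thesis by blast
qed

lemma kernel_continuous_measurable:
  assumes kc: "kernel_continuous m R"
    and "sets M1 = sets (OmegaBorel m)" and "sets M2 = sets (OmegaBorel m)"
  shows "(\<lambda>(x, y). R x y) \<in> measurable (M1 \<Otimes>\<^sub>M M2) (OmegaBorel m)"
proof -
  let ?N = "OmegaBorel m \<Otimes>\<^sub>M OmegaBorel m"
  have "(\<lambda>(x, y). R x y) \<in> measurable ?N (measure_of (OmegaSet m) {U. Omega_open m U} (\<lambda>_. 0))"
  proof (rule measurable_measure_of)
    show "(\<lambda>(x, y). R x y) \<in> space ?N \<rightarrow> OmegaSet m"
      using kc by (auto simp: space_pair_measure space_OmegaBorel kernel_continuous_def)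
    fix U assume "U \<in> {U. Omega_open m U}"
    then have U: "Omega_open m U" by simp
    have "{(x, y). x \<in> OmegaSet m \<and> y \<in> OmegaSet m \<and> R x y \<in> U} \<in> sets ?N"
    proof (rule in_pair_sets_if_cylinder_nbhds, clarify)
      fix x y assume "x \<in> OmegaSet m" "y \<in> OmegaSet m" "R x y \<in> U"
      with kernel_continuous_cylinder_nbhd[OF kc U] obtain n where
        "\<forall>x'\<in>cylinder m (map x [0..<n]). \<forall>y'\<in>cylinder m (map y [0..<n]). R x' y' \<in> U"
        by blast
      with \<open>x \<in> OmegaSet m\<close> \<open>y \<in> OmegaSet m\<close> show "\<exists>p q. (x, y) \<in> cylinder m p \<times> cylinder m q \<and>
          cylinder m p \<times> cylinder m q \<subseteq> {(x, y). x \<in> OmegaSet m \<and> y \<in> OmegaSet m \<and> R x y \<in> U}"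
        by (intro exI[of _ "map x [0..<n]"] exI[of _ "map y [0..<n]"])
          (auto simp: mem_cylinder_prefix cylinder_def)
    qed
    moreover have "(\<lambda>(x, y). R x y) -` U \<inter> space ?N
        = {(x, y). x \<in> OmegaSet m \<and> y \<in> OmegaSet m \<and> R x y \<in> U}"
      by (auto simp: space_pair_measure space_OmegaBorel)
    ultimately show "(\<lambda>(x, y). R x y) -` U \<inter> space ?N \<in> sets ?N" by simp
  qed (auto simp: Omega_open_def)
  moreover have "sets (M1 \<Otimes>\<^sub>M M2) = sets ?N"
    using assms(2,3) by (rule sets_pair_measure_cong)
  ultimately show ?thesis
    unfolding OmegaBorel_def[symmetric] using measurable_cong_sets by blast
qed

lemma space_ProbMeas: "\<mu> \<in> ProbMeas m \<Longrightarrow> space \<mu> = OmegaSet m"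
  unfolding ProbMeas_def using sets_eq_imp_space_eq[of \<mu> "OmegaBorel m"] space_OmegaBorel by auto

lemma prob_space_ProbMeas: "\<mu> \<in> ProbMeas m \<Longrightarrow> prob_space \<mu>"
  unfolding ProbMeas_def by auto

lemma Lip1_diff_le_one:
  "Lip1 m f \<Longrightarrow> x \<in> OmegaSet m \<Longrightarrow> y \<in> OmegaSet m \<Longrightarrow> \<bar>f x - f y\<bar> \<le> 1"
  unfolding Lip1_def using dOmega_le_one order_trans by blast

lemma Lip1_integrable:
  assumes "\<mu> \<in> ProbMeas m" and "Lip1 m f"
  shows "integrable \<mu> f"
proof -
  interpret prob_space \<mu> using prob_space_ProbMeas[OF assms(1)] .
  obtain x0 where x0: "x0 \<in> OmegaSet m"
    using not_empty space_ProbMeas[OF assms(1)] by blast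
  have "f \<in> borel_measurable \<mu>"
    using Lip1_borel_measurable[OF assms(2)] assms(1)
    by (simp add: ProbMeas_def cong: measurable_cong_sets)
  moreover have "\<bar>f x\<bar> \<le> \<bar>f x0\<bar> + 1" if "x \<in> OmegaSet m" for x
    using Lip1_diff_le_one[OF assms(2) that x0] by linarith
  ultimately show ?thesis
    using space_ProbMeas[OF assms(1)] by (intro integrable_const_bound[where B="\<bar>f x0\<bar> + 1"]) auto
qed

lemma Lip1_integral_near:
  assumes "\<mu> \<in> ProbMeas m" and "Lip1 m f" and "x0 \<in> OmegaSet m"
  shows "\<bar>(\<integral>x. f x \<partial>\<mu>) - f x0\<bar> \<le> 1"
proof -
  interpret prob_space \<mu> using prob_space_ProbMeas[OF assms(1)] .
  have "AE x in \<mu>. f x0 - 1 \<le> f x \<and> f x \<le> f x0 + 1"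
    using Lip1_diff_le_one[OF assms(2) _ assms(3)] space_ProbMeas[OF assms(1)]
    by (intro AE_I2) (fastforce simp: abs_le_iff)
  then have "f x0 - 1 \<le> (\<integral>x. f x \<partial>\<mu>)" "(\<integral>x. f x \<partial>\<mu>) \<le> f x0 + 1"
    using Lip1_integrable[OF assms(1,2)]
    by (auto intro!: integral_ge_const integral_le_const elim: AE_mp)
  then show ?thesis by linarith
qed

lemma integral_diff_le_dMK:
  assumes "\<mu> \<in> ProbMeas m" and "\<nu> \<in> ProbMeas m" and "Lip1 m f"
  shows "(\<integral>x. f x \<partial>\<mu>) - (\<integral>x. f x \<partial>\<nu>) \<le> dMK m \<mu> \<nu>"
  unfolding dMK_def
proof (rule cSUP_upper)
  obtain x0 where x0: "x0 \<in> OmegaSet m"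
    using prob_space.not_empty[OF prob_space_ProbMeas[OF assms(1)]] space_ProbMeas[OF assms(1)]
    by blast
  show "bdd_above ((\<lambda>f. (\<integral>x. f x \<partial>\<mu>) - (\<integral>x. f x \<partial>\<nu>)) ` {f. Lip1 m f})"
  proof (rule bdd_aboveI[where M=2], clarify)
    fix g assume "Lip1 m g"
    from Lip1_integral_near[OF assms(1) this x0] Lip1_integral_near[OF assms(2) this x0]
    show "(\<integral>x. g x \<partial>\<mu>) - (\<integral>x. g x \<partial>\<nu>) \<le> 2" by linarith
  qed
qed (use assms(3) in simp)

lemma dMK_le:
  assumes "\<And>f. Lip1 m f \<Longrightarrow> (\<integral>x. f x \<partial>\<mu>) - (\<integral>x. f x \<partial>\<nu>) \<le> c"
  shows "dMK m \<mu> \<nu> \<le> c"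
  unfolding dMK_def
  by (rule cSUP_least) (use assms dOmega_nonneg in \<open>auto simp: Lip1_def intro!: exI[of _ "\<lambda>_. 0"]\<close>)

text \<open>For s = 0 the function g is constant on Omega; otherwise g / s is 1-Lipschitz.\<close>
lemma Lipschitz_integral_diff_le_dMK:
  assumes "\<mu> \<in> ProbMeas m" and "\<nu> \<in> ProbMeas m" and "0 \<le> s"
    and g: "\<And>y y'. y \<in> OmegaSet m \<Longrightarrow> y' \<in> OmegaSet m \<Longrightarrow> \<bar>g y - g y'\<bar> \<le> s * dOmega y y'"
  shows "(\<integral>y. g y \<partial>\<mu>) - (\<integral>y. g y \<partial>\<nu>) \<le> s * dMK m \<mu> \<nu>"
proof (cases "s = 0")
  case True
  obtain y0 where y0: "y0 \<in> OmegaSet m"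
    using prob_space.not_empty[OF prob_space_ProbMeas[OF assms(1)]] space_ProbMeas[OF assms(1)]
    by blast
  have "(\<integral>y. g y \<partial>\<rho>) = g y0" if "\<rho> \<in> ProbMeas m" for \<rho>
  proof -
    interpret prob_space \<rho> using prob_space_ProbMeas[OF that] .
    have "(\<integral>y. g y \<partial>\<rho>) = (\<integral>y. g y0 \<partial>\<rho>)"
      using g[OF _ y0] True space_ProbMeas[OF that] by (intro Bochner_Integration.integral_cong) auto
    then show ?thesis by (simp add: prob_space)
  qed
  with assms(1,2) True show ?thesis by simp
next
  case False
  with assms(3) have "0 < s" by simp
  have "Lip1 m (\<lambda>y. g y / s)"
    unfolding Lip1_def using g \<open>0 < s\<close> by (simp add: diff_divide_distrib[symmetric] pos_divide_le_eq mult.commute)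
  then have "(\<integral>y. g y / s \<partial>\<mu>) - (\<integral>y. g y / s \<partial>\<nu>) \<le> dMK m \<mu> \<nu>"
    by (rule integral_diff_le_dMK[OF assms(1,2)])
  then show ?thesis
    using \<open>0 < s\<close> by (simp add: pos_divide_le_eq diff_divide_distrib[symmetric] mult.commute)
qed

lemma conv_in_ProbMeas:
  assumes "kernel_continuous m R" and "\<eta> \<in> ProbMeas m" and "\<mu> \<in> ProbMeas m"
  shows "conv m R \<eta> \<mu> \<in> ProbMeas m"
proof -
  have "prob_space (\<eta> \<Otimes>\<^sub>M \<mu>)"
    using assms(2,3) by (intro prob_space_pair prob_space_ProbMeas)
  then have "prob_space (conv m R \<eta> \<mu>)"
    unfolding conv_def using assms
    by (intro prob_space.prob_space_distr kernel_continuous_measurable) (auto simp: ProbMeas_def)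
  then show ?thesis by (simp add: ProbMeas_def conv_def)
qed

lemma integral_conv:
  assumes "kernel_continuous m R" and "\<eta> \<in> ProbMeas m" and "\<mu> \<in> ProbMeas m" and "Lip1 m f"
  shows "(\<integral>z. f z \<partial>conv m R \<eta> \<mu>) = (\<integral>x. (\<integral>y. f (R x y) \<partial>\<mu>) \<partial>\<eta>)"
    and "integrable \<eta> (\<lambda>x. \<integral>y. f (R x y) \<partial>\<mu>)"
proof -
  interpret P: pair_prob_space \<eta> \<mu>
    using assms(2,3) by (intro pair_prob_space.intro pair_sigma_finite.intro
        prob_space_imp_sigma_finite prob_space_ProbMeas)
  have R: "(\<lambda>(x, y). R x y) \<in> measurable (\<eta> \<Otimes>\<^sub>M \<mu>) (OmegaBorel m)"
    using assms by (intro kernel_continuous_measurable) (auto simp: ProbMeas_def)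
  have "integrable (conv m R \<eta> \<mu>) f"
    using Lip1_integrable[OF conv_in_ProbMeas[OF assms(1-3)] assms(4)] .
  then have int: "integrable (\<eta> \<Otimes>\<^sub>M \<mu>) (\<lambda>(x, y). f (R x y))"
    unfolding conv_def using integrable_distr_eq[OF R Lip1_borel_measurable[OF assms(4)]]
    by (simp add: case_prod_unfold)
  have "(\<integral>z. f z \<partial>conv m R \<eta> \<mu>) = (\<integral>(x, y). f (R x y) \<partial>(\<eta> \<Otimes>\<^sub>M \<mu>))"
    unfolding conv_def using integral_distr[OF R Lip1_borel_measurable[OF assms(4)]]
    by (simp add: case_prod_unfold)
  also have "\<dots> = (\<integral>x. (\<integral>y. f (R x y) \<partial>\<mu>) \<partial>\<eta>)"
    using P.integral_fst'[OF int] by simp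
  finally show "(\<integral>z. f z \<partial>conv m R \<eta> \<mu>) = (\<integral>x. (\<integral>y. f (R x y) \<partial>\<mu>) \<partial>\<eta>)" .
  show "integrable \<eta> (\<lambda>x. \<integral>y. f (R x y) \<partial>\<mu>)"
    using P.integrable_fst'[OF int] by simp
qed

lemma dMK_conv_le:
  assumes kc: "kernel_continuous m R" and \<eta>: "\<eta> \<in> ProbMeas m"
    and \<mu>: "\<mu> \<in> ProbMeas m" and \<mu>': "\<mu>' \<in> ProbMeas m" and "0 \<le> s"
    and contr: "\<And>x y y'. x \<in> OmegaSet m \<Longrightarrow> y \<in> OmegaSet m \<Longrightarrow> y' \<in> OmegaSet m \<Longrightarrow>
           dOmega (R x y) (R x y') \<le> s * dOmega y y'"
  shows "dMK m (conv m R \<eta> \<mu>) (conv m R \<eta> \<mu>') \<le> s * dMK m \<mu> \<mu>'"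
proof (rule dMK_le)
  fix f assume f: "Lip1 m f"
  interpret prob_space \<eta> using prob_space_ProbMeas[OF \<eta>] .
  have inner: "(\<integral>y. f (R x y) \<partial>\<mu>) - (\<integral>y. f (R x y) \<partial>\<mu>') \<le> s * dMK m \<mu> \<mu>'"
    if x: "x \<in> OmegaSet m" for x
  proof (rule Lipschitz_integral_diff_le_dMK[OF \<mu> \<mu>' \<open>0 \<le> s\<close>])
    fix y y' assume y: "y \<in> OmegaSet m" and y': "y' \<in> OmegaSet m"
    have "\<bar>f (R x y) - f (R x y')\<bar> \<le> dOmega (R x y) (R x y')"
      using f kc x y y' unfolding Lip1_def kernel_continuous_def by blast
    also have "\<dots> \<le> s * dOmega y y'" by (rule contr[OF x y y'])
    finally show "\<bar>f (R x y) - f (R x y')\<bar> \<le> s * dOmega y y'" .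
  qed
  note conv\<mu> = integral_conv[OF kc \<eta> \<mu> f] and conv\<mu>' = integral_conv[OF kc \<eta> \<mu>' f]
  have "(\<integral>z. f z \<partial>conv m R \<eta> \<mu>) - (\<integral>z. f z \<partial>conv m R \<eta> \<mu>')
      = (\<integral>x. (\<integral>y. f (R x y) \<partial>\<mu>) - (\<integral>y. f (R x y) \<partial>\<mu>') \<partial>\<eta>)"
    using conv\<mu> conv\<mu>' by simp
  also have "\<dots> \<le> s * dMK m \<mu> \<mu>'"
    using conv\<mu>(2) conv\<mu>'(2) inner space_ProbMeas[OF \<eta>]
    by (intro integral_le_const AE_I2) auto
  finally show "(\<integral>z. f z \<partial>conv m R \<eta> \<mu>) - (\<integral>z. f z \<partial>conv m R \<eta> \<mu>') \<le> s * dMK m \<mu> \<mu>'" .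
qed

theorem corollary3p2:
  fixes m :: nat and s :: real
    and R :: "(nat \<Rightarrow> nat) \<Rightarrow> (nat \<Rightarrow> nat) \<Rightarrow> (nat \<Rightarrow> nat)"
    and \<eta> :: "nat \<Rightarrow> (nat \<Rightarrow> nat) measure"
  assumes "m \<ge> 1"
    and "\<And>j. \<eta> j \<in> ProbMeas m"
    and "kernel_continuous m R"
    and "0 \<le> s" and "s < 1"
    and "\<And>x y y'. x \<in> OmegaSet m \<Longrightarrow> y \<in> OmegaSet m \<Longrightarrow> y' \<in> OmegaSet m \<Longrightarrow>
           dOmega (R x y) (R x y') \<le> s * dOmega y y'"
  shows "\<forall>j. \<forall>\<mu>\<in>ProbMeas m. \<forall>\<mu>'\<in>ProbMeas m.
           conv m R (\<eta> j) \<mu> \<in> ProbMeas m \<and>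
           dMK m (conv m R (\<eta> j) \<mu>) (conv m R (\<eta> j) \<mu>') \<le> s * dMK m \<mu> \<mu>'"
  using conv_in_ProbMeas[OF assms(3) assms(2)] dMK_conv_le[OF assms(3) assms(2) _ _ assms(4,6)]
  by blast

end
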